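(* Let $q$ be a power of $2$. For $i=1,\dots,k$, let $b_i\in\mathbb{F}_q^*$, let $\delta\in\mathbb{F}_{q^2}$, and let $s_i$ be positive integers with $s_iq\equiv s_i\pmod{q^2-1}$. Then the polynomial $$P(x)=\sum_{i=1}^k b_i(x^q+x+\delta)^{s_i}+x$$ is an involution over $\mathbb{F}_{q^2}$.
   Context: A polynomial $P$ is an involution over $\mathbb{F}_{q^2}$ if it is a permutation polynomial of $\mathbb{F}_{q^2}$ equal to its own compositional inverse, i.e. $P(P(c))=c$ for all $c\in\mathbb{F}_{q^2}$. *)

theory Defs
  imports "HOL-Computational_Algebra.Polynomial" "HOL-Number_Theory.Cong" "HOL-Library.Cardinality"
begin

text \<open>A polynomial over a finite field (the whole type 'a, playing the role of F_{q^2})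
  is an involution if it induces a permutation of the field that is its own inverse.\<close>
definition involution_poly :: "'a::{finite,field} poly \<Rightarrow> bool" where
  "involution_poly P \<longleftrightarrow> bij (poly P) \<and> (\<forall>c. poly P (poly P c) = c)"

end

theory Submission
  imports Defs "HOL-Algebra.FiniteProduct" "HOL-Computational_Algebra.Primes"
begin

text \<open>
  The field has characteristic 2. Put \<open>T x = x^q + x + \<delta>\<close> and \<open>h y = \<Sum>\<^sub>i b\<^sub>i y^s\<^sub>i\<close>,
  so that \<open>P x = x + h (T x)\<close>. Since \<open>b\<^sub>i^q = b\<^sub>i\<close>, and \<open>y^(s\<^sub>i q) = y^s\<^sub>i\<close> because the field
  has \<open>q\<^sup>2\<close> elements, every value of \<open>h\<close> is fixed by the Frobenius map \<open>y \<mapsto> y^q\<close>. Hence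
  \<open>T (P x) = T x + h(T x)^q + h(T x) = T x\<close> and \<open>P (P x) = x + 2 h(T x) = x\<close>.
\<close>

lemma of_nat_card_eq_0: "of_nat CARD('a) = (0 :: 'a :: {finite, ring_1})"
proof -
  define G where "G = \<lparr>carrier = UNIV :: 'a set, monoid.mult = (+), one = 0 :: 'a\<rparr>"
  interpret comm_group G
    by (rule comm_groupI) (auto simp: G_def add_ac intro: exI[where x = "- _"])
  have pow: "x [^]\<^bsub>G\<^esub> n = of_nat n * x" for x :: 'a and n :: nat
    by (induction n) (simp_all add: G_def algebra_simps)
  have "1 [^]\<^bsub>G\<^esub> card (carrier G) = \<one>\<^bsub>G\<^esub>"
    by (rule power_order_eq_one) (simp_all add: G_def)
  then show ?thesis
    unfolding pow by (simp add: G_def)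
qed

(* The library's finite_field_power_card_eq_same is stated for sort finite_field,
   which a type variable of sort {finite, field} does not have. *)
lemma finite_field_power_card_minus_one:
  fixes x :: "'a :: {finite, field}"
  assumes "x \<noteq> 0"
  shows "x ^ (CARD('a) - 1) = 1"
proof -
  define G where "G = \<lparr>carrier = UNIV - {0 :: 'a}, monoid.mult = (*), one = 1 :: 'a\<rparr>"
  interpret comm_group G
    by (rule comm_groupI)
      (auto simp: G_def mult_ac,
       metis Diff_iff UNIV_I inverse_nonzero_iff_nonzero right_inverse singletonD)
  have pow: "y [^]\<^bsub>G\<^esub> n = y ^ n" for y :: 'a and n :: nat
    by (induction n) (simp_all add: G_def)
  have "x [^]\<^bsub>G\<^esub> card (carrier G) = \<one>\<^bsub>G\<^esub>"
    by (rule power_order_eq_one) (simp_all add: G_def assms)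
  then show ?thesis
    unfolding pow by (simp add: G_def card_Diff_singleton)
qed

lemma CHAR_eq_2_if_card_power_of_2:
  assumes "CARD('a :: {finite, field}) = 2 ^ n"
  shows "CHAR('a) = 2"
proof -
  have prime: "prime CHAR('a)"
    by (intro prime_CHAR_semidom finite_imp_CHAR_pos) simp
  have "of_nat (2 ^ n) = (0 :: 'a)"
    unfolding assms[symmetric] by (rule of_nat_card_eq_0)
  then have "CHAR('a) dvd 2 ^ n"
    by (simp only: of_nat_eq_0_iff_char_dvd)
  then have "CHAR('a) dvd 2"
    by (rule prime_dvd_power[OF prime])
  then show ?thesis
    by (rule primes_dvd_imp_eq[OF prime two_is_prime_nat])
qed

lemma finite_field_power_eq_if_cong:
  fixes y :: "'a :: {finite, field}"
  assumes "[e = e'] (mod (CARD('a) - 1))" and "e > 0" and "e' > 0"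
  shows "y ^ e = y ^ e'"
proof (cases "y = 0")
  case True
  with assms show ?thesis by (simp add: zero_power)
next
  case False
  let ?N = "CARD('a) - 1"
  have reduce: "y ^ n = y ^ (n mod ?N)" for n
  proof -
    have "y ^ n = (y ^ ?N) ^ (n div ?N) * y ^ (n mod ?N)"
      by (metis div_mult_mod_eq mult.commute power_add power_mult)
    also have "\<dots> = y ^ (n mod ?N)"
      by (simp only: finite_field_power_card_minus_one[OF False] power_one mult_1_left)
    finally show ?thesis .
  qed
  show ?thesis
    using assms(1) reduce[of e] reduce[of e'] by (simp add: cong_def)
qed

lemma frobenius_fixed_shift_involutive:
  fixes h :: "'a \<Rightarrow> 'a :: comm_ring_1" and \<delta> :: 'a
  assumes char: "CHAR('a) = 2" and q: "q = 2 ^ m" and h_fixed: "\<And>y. h y ^ q = h y"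
  defines "F \<equiv> \<lambda>x. x + h (x ^ q + x + \<delta>)"
  shows "F (F x) = x"
proof -
  have double: "y + y = 0" for y :: 'a
    using of_nat_CHAR[where 'a = 'a] char by (metis mult_2 mult_zero_left of_nat_numeral)
  have frobenius: "(y + z) ^ q = y ^ q + z ^ q" for y z :: 'a
    by (rule freshmans_dream'[where n = m]) (simp_all add: char q)
  let ?T = "\<lambda>x. x ^ q + x + \<delta>"
  have "?T (F x) = ?T x + (h (?T x) ^ q + h (?T x))"
    by (simp add: F_def frobenius algebra_simps)
  also have "\<dots> = ?T x"
    by (simp add: h_fixed double)
  finally have T_invariant: "?T (F x) = ?T x" .
  have "F (F x) = F x + h (?T (F x))"
    by (simp only: F_def)
  also have "\<dots> = x + (h (?T x) + h (?T x))"
    unfolding T_invariant by (simp only: F_def add.assoc)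
  finally show ?thesis
    by (simp add: double)
qed

lemma involution_polyI:
  assumes "\<And>c. poly P (poly P c) = c"
  shows "involution_poly P"
  unfolding involution_poly_def using assms by (metis bijI')

theorem theorem3p1:
  fixes q k :: nat and b :: "nat \<Rightarrow> 'a::{finite,field}" and s :: "nat \<Rightarrow> nat"
    and \<delta> :: 'a
  assumes q_pow2: "\<exists>m\<ge>1. q = 2 ^ m"
    and card: "CARD('a) = q ^ 2"
    and b_Fq: "\<forall>i\<in>{1..k}. b i ^ q = b i \<and> b i \<noteq> 0"
    and s_pos: "\<forall>i\<in>{1..k}. s i > 0"
    and s_cong: "\<forall>i\<in>{1..k}. [s i * q = s i] (mod (q ^ 2 - 1))"
  shows "involution_poly
           ((\<Sum>i\<in>{1..k}. smult (b i) ((monom 1 q + [:\<delta>, 1:]) ^ s i)) + [:0, 1:])"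
proof -
  let ?P = "(\<Sum>i\<in>{1..k}. smult (b i) ((monom 1 q + [:\<delta>, 1:]) ^ s i)) + [:0, 1:]"
  obtain m where q: "q = 2 ^ m"
    using q_pow2 by blast
  have char: "CHAR('a) = 2"
    using CHAR_eq_2_if_card_power_of_2[of "2 * m"] card q by (simp add: power_mult mult.commute)
  define h where "h y = (\<Sum>i\<in>{1..k}. b i * y ^ s i)" for y :: 'a
  have h_fixed: "h y ^ q = h y" for y
  proof -
    have "h y ^ q = (\<Sum>i\<in>{1..k}. b i ^ q * y ^ (s i * q))"
      unfolding h_def using char q
      by (simp add: freshmans_dream_sum' power_mult_distrib power_mult)
    also have "\<dots> = h y"
      unfolding h_def using b_Fq s_pos s_cong card q
      by (intro sum.cong refl) (simp add: finite_field_power_eq_if_cong)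
    finally show ?thesis .
  qed
  have poly_P: "poly ?P = (\<lambda>x. x + h (x ^ q + x + \<delta>))"
    by (rule ext) (simp add: h_def poly_sum poly_monom algebra_simps)
  show ?thesis
    by (rule involution_polyI, unfold poly_P)
      (rule frobenius_fixed_shift_involutive[OF char q h_fixed])
qed

end
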